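(* Let $n\geq 1$ and let $c_1,c_2$ be two $n$-configurations. Let $G_1,G_2$ be groups such that $c_1$ is realisable in $G_1$ and $c_2$ is realisable in $G_2$. Then the join $c_1\wedge c_2$ is realisable in $G_1\times G_2$.
   Context: Write $[n]=\{1,\dots,n\}$. An $n$-configuration is a map $c\colon \mathcal{P}([n])\setminus\{\emptyset\}\to\{0,1\}$. An $n$-configuration $c$ is realisable in a group $G$ if there exist subgroups $H_1,\dots,H_n\leq G$ such that for every non-empty subset $I\subseteq[n]$, the subgroup $\bigcap_{i\in I}H_i$ is finitely generated if and only if $c(I)=0$. The join of two $n$-configurations $c_1,c_2$ is the $n$-configuration $c_1\wedge c_2$ defined by $(c_1\wedge c_2)(I)=0$ if $c_1(I)=0$ and $c_2(I)=0$, and $(c_1\wedge c_2)(I)=1$ otherwise. *)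

theory Defs
  imports "HOL-Algebra.Algebra"
begin

definition fin_gen_subgroup :: "('a, 'b) monoid_scheme \<Rightarrow> 'a set \<Rightarrow> bool" where
  "fin_gen_subgroup G H \<longleftrightarrow> subgroup H G \<and> (\<exists>S. finite S \<and> S \<subseteq> H \<and> generate G S = H)"

text \<open>An n-configuration: a map from nonempty subsets of {1..n} to {0,1}, represented as
  a function on nat sets; only its values on nonempty subsets of {1..n} matter.\<close>
definition is_configuration :: "nat \<Rightarrow> (nat set \<Rightarrow> nat) \<Rightarrow> bool" where
  "is_configuration n c \<longleftrightarrow> (\<forall>I. I \<subseteq> {1..n} \<and> I \<noteq> {} \<longrightarrow> c I \<in> {0, 1})"

definition realisable :: "nat \<Rightarrow> (nat set \<Rightarrow> nat) \<Rightarrow> ('a, 'b) monoid_scheme \<Rightarrow> bool" where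
  "realisable n c G \<longleftrightarrow> (\<exists>H :: nat \<Rightarrow> 'a set.
     (\<forall>i\<in>{1..n}. subgroup (H i) G) \<and>
     (\<forall>I. I \<subseteq> {1..n} \<and> I \<noteq> {} \<longrightarrow>
        (fin_gen_subgroup G (\<Inter>i\<in>I. H i) \<longleftrightarrow> c I = 0)))"

definition config_join :: "(nat set \<Rightarrow> nat) \<Rightarrow> (nat set \<Rightarrow> nat) \<Rightarrow> (nat set \<Rightarrow> nat)" where
  "config_join c1 c2 = (\<lambda>I. if c1 I = 0 \<and> c2 I = 0 then 0 else 1)"

end

theory Submission
  imports Defs
begin

text \<open>Realise the join by the products \<open>H\<^sub>i \<times> K\<^sub>i\<close> of realising families. Intersections
  commute with products, and a product \<open>A \<times> B\<close> of subgroups is finitely generated exactly when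
  both factors are: the projections carry generators of \<open>A \<times> B\<close> to generators of the factors,
  and conversely the embedded generators of \<open>A\<close> and \<open>B\<close> together generate \<open>A \<times> B\<close>.\<close>

lemma (in group_hom) fin_gen_subgroup_img:
  assumes "fin_gen_subgroup G K"
  shows "fin_gen_subgroup H (h ` K)"
proof -
  obtain S where S: "finite S" "S \<subseteq> K" "generate G S = K"
    using assms unfolding fin_gen_subgroup_def by blast
  have K: "subgroup K G"
    using assms unfolding fin_gen_subgroup_def by blast
  have "generate H (h ` S) = h ` K"
    using generate_img S(2,3) subgroup.subset[OF K] by auto
  then show ?thesis
    unfolding fin_gen_subgroup_def
    using subgroup_img_is_subgroup[OF K] S(1,2) by (intro conjI exI[of _ "h ` S"]) auto
qed

lemma (in group) fin_gen_subgroup_generate_Un: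
  assumes "fin_gen_subgroup G A" and "fin_gen_subgroup G B"
  shows "fin_gen_subgroup G (generate G (A \<union> B))"
proof -
  obtain S T where S: "finite S" "S \<subseteq> A" "generate G S = A"
    and T: "finite T" "T \<subseteq> B" "generate G T = B"
    using assms unfolding fin_gen_subgroup_def by blast
  have "subgroup A G" "subgroup B G"
    using assms unfolding fin_gen_subgroup_def by blast+
  then have AB: "A \<union> B \<subseteq> carrier G"
    using subgroup.subset by blast
  have ST: "S \<union> T \<subseteq> A \<union> B"
    using S(2) T(2) by blast
  have "A \<union> B \<subseteq> generate G (S \<union> T)"
    using mono_generate[of S "S \<union> T"] mono_generate[of T "S \<union> T"] S(3) T(3) by auto
  moreover have "subgroup (generate G (S \<union> T)) G"
    using generate_is_subgroup ST AB by (meson order_trans)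
  ultimately have "generate G (A \<union> B) \<subseteq> generate G (S \<union> T)"
    by (rule generate_subgroup_incl)
  then have gen_eq: "generate G (S \<union> T) = generate G (A \<union> B)"
    using mono_generate[OF ST] by (rule antisym[rotated])
  have "S \<union> T \<subseteq> generate G (A \<union> B)"
    using ST generate.incl[of _ "A \<union> B" G] by blast
  then show ?thesis
    unfolding fin_gen_subgroup_def
    using generate_is_subgroup[OF AB] S(1) T(1) gen_eq by blast
qed

lemma group_hom_DirProd_fst_snd:
  assumes "group G" and "group H"
  shows "group_hom (G \<times>\<times> H) G fst" and "group_hom (G \<times>\<times> H) H snd"
  unfolding group_hom_def group_hom_axioms_def
  using assms DirProd_group by (auto simp: hom_def mult_DirProd')

lemma group_hom_DirProd_embeddings:
  assumes "group G" and "group H"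
  shows "group_hom G (G \<times>\<times> H) (\<lambda>a. (a, \<one>\<^bsub>H\<^esub>))"
    and "group_hom H (G \<times>\<times> H) (\<lambda>b. (\<one>\<^bsub>G\<^esub>, b))"
  unfolding group_hom_def group_hom_axioms_def
  using assms DirProd_group by (auto simp: hom_def group.is_monoid)

lemma DirProd_subgroup_eq_generate_embeddings:
  assumes G: "group G" and H: "group H" and A: "subgroup A G" and B: "subgroup B H"
  shows "A \<times> B = generate (G \<times>\<times> H) ((\<lambda>a. (a, \<one>\<^bsub>H\<^esub>)) ` A \<union> (\<lambda>b. (\<one>\<^bsub>G\<^esub>, b)) ` B)"
    (is "_ = generate _ ?E")
proof
  interpret GH: group "G \<times>\<times> H"
    using DirProd_group[OF G H] .
  have E: "?E \<subseteq> A \<times> B"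
    using subgroup.one_closed[OF A] subgroup.one_closed[OF B] by auto
  show "generate (G \<times>\<times> H) ?E \<subseteq> A \<times> B"
    using GH.generate_subgroup_incl[OF E DirProd_subgroups[OF G A H B]] .
  show "A \<times> B \<subseteq> generate (G \<times>\<times> H) ?E"
  proof clarify
    fix a b
    assume ab: "a \<in> A" "b \<in> B"
    then have "(a, \<one>\<^bsub>H\<^esub>) \<otimes>\<^bsub>G \<times>\<times> H\<^esub> (\<one>\<^bsub>G\<^esub>, b) \<in> generate (G \<times>\<times> H) ?E"
      by (intro generate.eng generate.incl) auto
    moreover have "a \<in> carrier G" "b \<in> carrier H"
      using ab subgroup.subset[OF A] subgroup.subset[OF B] by auto
    ultimately show "(a, b) \<in> generate (G \<times>\<times> H) ?E"
      using G H by (simp add: group.is_monoid)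
  qed
qed

lemma fin_gen_subgroup_DirProd_iff:
  assumes G: "group G" and H: "group H" and A: "subgroup A G" and B: "subgroup B H"
  shows "fin_gen_subgroup (G \<times>\<times> H) (A \<times> B) \<longleftrightarrow> fin_gen_subgroup G A \<and> fin_gen_subgroup H B"
proof
  assume AB: "fin_gen_subgroup (G \<times>\<times> H) (A \<times> B)"
  have "A \<noteq> {}" "B \<noteq> {}"
    using A B subgroup.one_closed by blast+
  then show "fin_gen_subgroup G A \<and> fin_gen_subgroup H B"
    using group_hom.fin_gen_subgroup_img[OF group_hom_DirProd_fst_snd(1)[OF G H] AB]
      group_hom.fin_gen_subgroup_img[OF group_hom_DirProd_fst_snd(2)[OF G H] AB]
    by simp
next
  assume "fin_gen_subgroup G A \<and> fin_gen_subgroup H B"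
  then show "fin_gen_subgroup (G \<times>\<times> H) (A \<times> B)"
    unfolding DirProd_subgroup_eq_generate_embeddings[OF G H A B]
    using group_hom.fin_gen_subgroup_img[OF group_hom_DirProd_embeddings(1)[OF G H]]
      group_hom.fin_gen_subgroup_img[OF group_hom_DirProd_embeddings(2)[OF G H]]
    by (intro group.fin_gen_subgroup_generate_Un DirProd_group G H) auto
qed

theorem lemma2p7:
  fixes G1 :: "('a, 'c) monoid_scheme" and G2 :: "('b, 'd) monoid_scheme"
    and c1 c2 :: "nat set \<Rightarrow> nat" and n :: nat
  assumes "n \<ge> 1"
    and "is_configuration n c1" and "is_configuration n c2"
    and "group G1" and "group G2"
    and "realisable n c1 G1" and "realisable n c2 G2"
  shows "realisable n (config_join c1 c2) (G1 \<times>\<times> G2)"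
proof -
  obtain H where H: "\<forall>i\<in>{1..n}. subgroup (H i) G1"
    "\<forall>I. I \<subseteq> {1..n} \<and> I \<noteq> {} \<longrightarrow> (fin_gen_subgroup G1 (\<Inter>i\<in>I. H i) \<longleftrightarrow> c1 I = 0)"
    using assms(6) unfolding realisable_def by blast
  obtain K where K: "\<forall>i\<in>{1..n}. subgroup (K i) G2"
    "\<forall>I. I \<subseteq> {1..n} \<and> I \<noteq> {} \<longrightarrow> (fin_gen_subgroup G2 (\<Inter>i\<in>I. K i) \<longleftrightarrow> c2 I = 0)"
    using assms(7) unfolding realisable_def by blast
  show ?thesis
    unfolding realisable_def
  proof (intro exI[of _ "\<lambda>i. H i \<times> K i"] conjI allI impI ballI)
    fix i
    assume "i \<in> {1..n}"
    then show "subgroup (H i \<times> K i) (G1 \<times>\<times> G2)"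
      using DirProd_subgroups[OF assms(4) _ assms(5)] H(1) K(1) by blast
  next
    fix I
    assume I: "I \<subseteq> {1..n} \<and> I \<noteq> {}"
    have Inter_Times: "(\<Inter>i\<in>I. H i \<times> K i) = (\<Inter>i\<in>I. H i) \<times> (\<Inter>i\<in>I. K i)"
      using I by blast
    have H_Inter: "subgroup (\<Inter>i\<in>I. H i) G1"
      using group.subgroups_Inter[OF assms(4), of "H ` I"] I H(1) by blast
    have K_Inter: "subgroup (\<Inter>i\<in>I. K i) G2"
      using group.subgroups_Inter[OF assms(5), of "K ` I"] I K(1) by blast
    show "fin_gen_subgroup (G1 \<times>\<times> G2) (\<Inter>i\<in>I. H i \<times> K i) \<longleftrightarrow> config_join c1 c2 I = 0"
      unfolding Inter_Times fin_gen_subgroup_DirProd_iff[OF assms(4,5) H_Inter K_Inter] config_join_def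
      using H(2) K(2) I by auto
  qed
qed

end
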